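(* Let $n\ge2$, $1\le k\le n-1$. Let $Y$ have a continuous distribution function $G$ on $[l_G,r_G]$, and let $g$ be positive, continuous and strictly decreasing on $(l_G,r_G)$ with $\lim_{y\to r_G^-}g(y)=0$; put $\tau=\lim_{y\to l_G^+}[g(y)]^{-1/(k+1)}$. Then \[ E[g(Y(n))\mid Y(n-k)=s,\ Y(n+1)=t]=[g(t)]^{k/(k+1)}[g(s)]^{1/(k+1)}\qquad (l_G<s<t<r_G) \] holds if and only if $G(y)=1-\exp\{-c([g(y)]^{-1/(k+1)}-\tau)\}$ for $l_G<y<r_G$, for some constant $c>0$.
   Context: $Y_1,Y_2,\dots$ are i.i.d. copies of $Y$ with distribution function $G$; $l_G=\inf\{y:G(y)>0\}$, $r_G=\sup\{y:G(y)<1\}$. Upper record times $L(1)=1$, $L(m)=\min\{j>L(m-1):Y_j>Y_{L(m-1)}\}$, record values $Y(m)=Y_{L(m)}$. With $R(y)=-\ln(1-G(y))$, conditional expectations given $Y(n-k)=s$, $Y(n+1)=t$ use the conditional density of $Y(n)$: $k[\frac{R(x)-R(s)}{R(t)-R(s)}]^{k-1}\frac{R'(x)}{R(t)-R(s)}$, $s<x<t$. *)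

theory Defs
  imports "HOL-Analysis.Analysis"
begin

definition lG :: "(real \<Rightarrow> real) \<Rightarrow> ereal" where
  "lG G = Inf (ereal ` {y. G y > 0})"

definition rG :: "(real \<Rightarrow> real) \<Rightarrow> ereal" where
  "rG G = Sup (ereal ` {y. G y < 1})"

definition at_lG :: "(real \<Rightarrow> real) \<Rightarrow> real filter" where
  "at_lG G = (if lG G = -\<infinity> then at_bot else at_right (real_of_ereal (lG G)))"

definition at_rG :: "(real \<Rightarrow> real) \<Rightarrow> real filter" where
  "at_rG G = (if rG G = \<infinity> then at_top else at_left (real_of_ereal (rG G)))"

definition Rfun :: "(real \<Rightarrow> real) \<Rightarrow> real \<Rightarrow> real" where
  "Rfun G y = - ln (1 - G y)"

text \<open>Conditional distribution function of Y(n) given Y(n-k)=s, Y(n+1)=t: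
  ((R(x)-R(s))/(R(t)-R(s)))^k for s \<le> x \<le> t (0 below s, 1 above t).\<close>
definition cond_cdf :: "(real \<Rightarrow> real) \<Rightarrow> nat \<Rightarrow> real \<Rightarrow> real \<Rightarrow> real \<Rightarrow> real" where
  "cond_cdf G k s t x =
     ((Rfun G (max s (min x t)) - Rfun G s) / (Rfun G t - Rfun G s)) ^ k"

text \<open>E[h(Y(n)) | Y(n-k)=s, Y(n+1)=t], as the Lebesgue-Stieltjes integral of h
  with respect to the conditional distribution above (on s < x < t).\<close>
definition cond_exp :: "(real \<Rightarrow> real) \<Rightarrow> nat \<Rightarrow> (real \<Rightarrow> real) \<Rightarrow> real \<Rightarrow> real \<Rightarrow> real" where
  "cond_exp G k h s t = (LINT x:{s<..<t}|interval_measure (cond_cdf G k s t). h x)"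

end

theory Submission
  imports Defs "HOL-Probability.Probability"
begin

text \<open>
  Write R = -ln(1 - G).  Given Y(n-k) = s and Y(n+1) = t, the variable R(Y(n)) has the
  power-function law with distribution function ((r - R(s))/(R(t) - R(s)))^k on
  [R(s), R(t)].  Hence, with h = g o R^(-1), the conditional expectation equals
  \<integral> k (r - a)^(k-1)/(b - a)^k h(r) dr over [a, b] = [R(s), R(t)] (change of variables).
  The identity E[g(Y(n)) | ...] = g(t)^(k/(k+1)) g(s)^(1/(k+1)) then becomes a functional
  equation for h, and the whole proof reduces to a fact of real analysis:
  h^(-1/(k+1)) is affine exactly when h satisfies that equation.  The "if" direction is an
  explicit antiderivative; the "only if" direction differentiates the equation in its upper
  endpoint.  Finally an affine relation g^(-1/(k+1)) = \<alpha> + \<beta> R forces \<beta> > 0 (g decreases)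
  and \<alpha> = lim g^(-1/(k+1)) at l_G (R vanishes there), which is the stated form of G.
\<close>

text \<open>It is the conditional law of
  R(Y(n)) given the neighbouring records.\<close>

definition power_cdf :: "real \<Rightarrow> real \<Rightarrow> nat \<Rightarrow> real \<Rightarrow> real" where
  "power_cdf a b k r = ((max a (min r b) - a) / (b - a)) ^ k"

definition power_pdf :: "real \<Rightarrow> real \<Rightarrow> nat \<Rightarrow> real \<Rightarrow> real" where
  "power_pdf a b k r = real k * (r - a) ^ (k - 1) / (b - a) ^ k"

definition power_distribution :: "real \<Rightarrow> real \<Rightarrow> nat \<Rightarrow> real measure" where
  "power_distribution a b k = density lborel (\<lambda>r. indicator {a..b} r * power_pdf a b k r)"

lemma power_pdf_has_integral:
  assumes ab: "a < b" and k: "1 \<le> k" and au: "a \<le> u"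
  shows "(power_pdf a b k has_integral ((u - a) / (b - a)) ^ k) {a..u}"
proof -
  have "(power_pdf a b k has_integral (((u - a) / (b - a)) ^ k - ((a - a) / (b - a)) ^ k)) {a..u}"
  proof (rule fundamental_theorem_of_calculus[OF au])
    fix x assume "x \<in> {a..u}"
    have "((\<lambda>x. ((x - a) / (b - a)) ^ k) has_real_derivative
            real k * ((x - a) / (b - a)) ^ (k - 1) * (1 / (b - a))) (at x within {a..u})"
      using ab by (auto intro!: derivative_eq_intros)
    moreover have "real k * ((x - a) / (b - a)) ^ (k - 1) * (1 / (b - a)) = power_pdf a b k x"
      using ab k by (cases k) (simp_all add: power_pdf_def power_divide)
    ultimately show "((\<lambda>x. ((x - a) / (b - a)) ^ k) has_vector_derivative power_pdf a b k x)
        (at x within {a..u})"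
      by (simp add: has_real_derivative_iff_has_vector_derivative)
  qed
  then show ?thesis using k by (simp add: power_0_left)
qed

lemma power_density_nonneg:
  assumes "a \<le> b"
  shows "0 \<le> indicator {a..b} r * power_pdf a b k r"
  using assms by (simp add: power_pdf_def indicator_def)

lemma power_distribution_cdf:
  assumes ab: "a < b" and k: "1 \<le> k"
  shows "real_distribution (power_distribution a b k)"
    and "cdf (power_distribution a b k) = power_cdf a b k"
proof -
  let ?D = "power_distribution a b k"
  have emeasure_Icc: "emeasure ?D A = ennreal (((u - a) / (b - a)) ^ k)"
    if A: "A \<inter> {a..b} = {a..u}" "A \<in> sets borel" and u: "a \<le> u" for A u
  proof -
    have "emeasure ?D A = (\<integral>\<^sup>+ r. ennreal (indicator {a..b} r * power_pdf a b k r) * indicator A r \<partial>lborel)"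
      unfolding power_distribution_def using A by (subst emeasure_density) (auto simp: power_pdf_def)
    also have "\<dots> = (\<integral>\<^sup>+ r. ennreal (indicator {a..u} r * power_pdf a b k r) \<partial>lborel)"
      using A(1) by (intro nn_integral_cong) (auto simp: indicator_def)
    also have "\<dots> = ennreal (((u - a) / (b - a)) ^ k)"
      using ab k u by (intro nn_integral_has_integral_lebesgue power_pdf_has_integral)
        (auto simp: power_pdf_def)
    finally show ?thesis .
  qed
  have "emeasure ?D UNIV = 1"
    using emeasure_Icc[of UNIV b] ab by simp
  then interpret prob_space ?D
    by (intro prob_spaceI) (simp add: power_distribution_def)
  show "real_distribution ?D"
    by unfold_locales (simp add: power_distribution_def)
  have "emeasure ?D {..r} = ennreal (power_cdf a b k r)" for r
  proof (cases "a \<le> r")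
    case True
    then show ?thesis
      using emeasure_Icc[of "{..r}" "min r b"] ab by (auto simp: power_cdf_def max_def)
  next
    case False
    have "emeasure ?D {..r}
        = (\<integral>\<^sup>+ x. ennreal (indicator {a..b} x * power_pdf a b k x) * indicator {..r} x \<partial>lborel)"
      unfolding power_distribution_def by (subst emeasure_density) (auto simp: power_pdf_def)
    also have "\<dots> = nn_integral lborel (\<lambda>x::real. 0)"
      using False by (intro nn_integral_cong) (auto simp: indicator_def)
    finally have "emeasure ?D {..r} = 0" by simp
    then show ?thesis using False k by (simp add: power_cdf_def)
  qed
  moreover have "0 \<le> power_cdf a b k r" for r
    using ab by (simp add: power_cdf_def)
  ultimately show "cdf ?D = power_cdf a b k"
    by (simp add: fun_eq_iff cdf_def measure_def)
qed

lemma mono_continuous_vimage_atMost: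
  fixes \<phi> :: "real \<Rightarrow> real"
  assumes cont: "continuous_on UNIV \<phi>" and mono: "mono \<phi>"
    and below: "\<phi> x1 \<le> r" and above: "r < \<phi> x2"
  obtains x0 where "\<phi> -` {..r} = {..x0}" and "\<phi> x0 = r"
proof -
  define S where "S = {x. \<phi> x \<le> r}"
  have S_bound: "x < x2" if "x \<in> S" for x
    using that above monoD[OF mono, of x2 x] by (force simp: S_def)
  then have bdd: "bdd_above S" by (auto intro!: bdd_aboveI[of _ x2] less_imp_le)
  have "closed S"
    unfolding S_def using cont by (intro closed_Collect_le continuous_intros) auto
  define x0 where "x0 = Sup S"
  have x0_S: "x0 \<in> S"
    unfolding x0_def using below bdd \<open>closed S\<close> by (intro closed_contains_Sup) (auto simp: S_def)
  obtain y where y: "x0 \<le> y" "y \<le> x2" "\<phi> y = r"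
    using IVT'[of \<phi> x0 r x2] x0_S S_bound[OF x0_S] above continuous_on_subset[OF cont]
    by (auto simp: S_def)
  have "y \<le> x0"
    unfolding x0_def using y bdd by (intro cSup_upper) (auto simp: S_def)
  then have "\<phi> x0 = r" using y by simp
  moreover have "\<phi> -` {..r} = {..x0}"
  proof (intro set_eqI iffI)
    fix x assume "x \<in> \<phi> -` {..r}"
    then show "x \<in> {..x0}" unfolding x0_def using bdd by (auto simp: S_def intro: cSup_upper)
  next
    fix x assume "x \<in> {..x0}"
    then show "x \<in> \<phi> -` {..r}" using monoD[OF mono, of x x0] \<open>\<phi> x0 = r\<close> by simp
  qed
  ultimately show ?thesis using that by blast
qed

lemma distr_interval_measure_comp:
  fixes F \<phi> :: "real \<Rightarrow> real"
  assumes M: "real_distribution M"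
    and \<phi>_cont: "continuous_on UNIV \<phi>" and \<phi>_mono: "mono \<phi>"
    and F_eq: "\<And>x. F x = cdf M (\<phi> x)"
    and F_rc: "\<And>x. continuous (at_right x) F"
    and F_bot: "(F \<longlongrightarrow> 0) at_bot" and F_top: "(F \<longlongrightarrow> 1) at_top"
  shows "distr (interval_measure F) borel \<phi> = M"
proof -
  interpret M: real_distribution M by (fact M)
  have F_mono: "F x \<le> F y" if "x \<le> y" for x y
    unfolding F_eq using monoD[OF \<phi>_mono that] by (rule M.cdf_nondecreasing)
  interpret m: real_distribution "interval_measure F"
    using F_mono F_rc F_bot F_top by (rule real_distribution_interval_measure)
  have \<phi>_meas: "\<phi> \<in> borel_measurable borel"
    using \<phi>_cont by (rule borel_measurable_continuous_onI)
  have "cdf (distr (interval_measure F) borel \<phi>) r = cdf M r" for r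
  proof -
    have "cdf (distr (interval_measure F) borel \<phi>) r = measure (interval_measure F) (\<phi> -` {..r})"
      unfolding cdf_def using \<phi>_meas by (subst measure_distr) auto
    also have "\<dots> = cdf M r"
    proof (cases "\<exists>x1. \<phi> x1 \<le> r" "\<exists>x2. r < \<phi> x2" rule: case_split[case_product case_split])
      case True_True
      then obtain x1 x2 where "\<phi> x1 \<le> r" "r < \<phi> x2" by blast
      then obtain x0 where "\<phi> -` {..r} = {..x0}" "\<phi> x0 = r"
        using mono_continuous_vimage_atMost[OF \<phi>_cont \<phi>_mono] by blast
      then show ?thesis
        using F_mono F_rc F_bot by (simp add: measure_interval_measure_Iic F_eq)
    next
      case True_False
      then have "\<phi> -` {..r} = UNIV" by (auto simp: not_less)
      moreover have "1 \<le> cdf M r"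
        using F_top by (rule tendsto_upperbound)
          (use True_False M.cdf_nondecreasing in \<open>auto simp: F_eq not_less\<close>)
      ultimately show ?thesis using M.cdf_bounded_prob[of r] m.prob_space by simp
    next
      case False_True
      then have "\<phi> -` {..r} = {}" by (auto simp: not_le dest: leD)
      moreover have "cdf M r \<le> 0"
        using F_bot by (rule tendsto_lowerbound)
          (use False_True in \<open>auto simp: F_eq not_le
            intro!: always_eventually less_imp_le[THEN M.cdf_nondecreasing]\<close>)
      ultimately show ?thesis using M.cdf_nonneg[of r] by simp
    next
      case False_False
      then show ?thesis by (meson not_le)
    qed
    finally show ?thesis .
  qed
  then show ?thesis
    using \<phi>_meas by (intro cdf_unique m.real_distribution_distr M) auto
qed

lemma Rfun_mono_isCont:
  fixes G :: "real \<Rightarrow> real"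
  assumes G_mono: "mono G" and G_cont: "continuous_on UNIV G" and Gt: "G t < 1"
  shows "\<And>x y. x \<le> y \<Longrightarrow> y \<le> t \<Longrightarrow> Rfun G x \<le> Rfun G y"
    and "\<And>x. x \<le> t \<Longrightarrow> isCont (Rfun G) x"
proof -
  fix x y assume "x \<le> y" "y \<le> t"
  then have "G x \<le> G y" "G y \<le> G t" using G_mono by (auto simp: mono_def)
  then show "Rfun G x \<le> Rfun G y" unfolding Rfun_def using Gt by simp
next
  fix x assume "x \<le> t"
  then have "1 - G x > 0" using Gt monoD[OF G_mono, of x t] by simp
  moreover have "isCont G x" using G_cont by (simp add: continuous_on_eq_continuous_at)
  ultimately show "isCont (Rfun G) x" unfolding Rfun_def by (auto intro!: continuous_intros)
qed

text \<open>R with its argument clamped to [s, t]; it transports the conditional law of Y(n) to the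
  R-scale.\<close>

definition clamped_Rfun :: "(real \<Rightarrow> real) \<Rightarrow> real \<Rightarrow> real \<Rightarrow> real \<Rightarrow> real" where
  "clamped_Rfun G s t x = Rfun G (max s (min x t))"

lemma clamped_Rfun:
  assumes G_mono: "mono G" and G_cont: "continuous_on UNIV G" and Gt: "G t < 1" and st: "s \<le> t"
  shows "continuous_on UNIV (clamped_Rfun G s t)"
    and "mono (clamped_Rfun G s t)"
    and "Rfun G s \<le> clamped_Rfun G s t x" and "clamped_Rfun G s t x \<le> Rfun G t"
    and "s \<le> x \<Longrightarrow> x \<le> t \<Longrightarrow> clamped_Rfun G s t x = Rfun G x"
proof -
  note R = Rfun_mono_isCont[OF G_mono G_cont Gt]
  have "isCont (clamped_Rfun G s t) x" for x
  proof -
    have "isCont (\<lambda>x. max s (min x t)) x" by (intro continuous_intros)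
    then show ?thesis
      unfolding clamped_Rfun_def[abs_def] by (rule isCont_o2) (use R(2) st in auto)
  qed
  then show "continuous_on UNIV (clamped_Rfun G s t)" by (simp add: continuous_at_imp_continuous_on)
  show "mono (clamped_Rfun G s t)"
    unfolding clamped_Rfun_def using st by (intro monoI R(1)) auto
  show "Rfun G s \<le> clamped_Rfun G s t x" and "clamped_Rfun G s t x \<le> Rfun G t"
    unfolding clamped_Rfun_def using st by (intro R(1); auto)+
  show "s \<le> x \<Longrightarrow> x \<le> t \<Longrightarrow> clamped_Rfun G s t x = Rfun G x"
    by (simp add: clamped_Rfun_def)
qed

lemma cond_cdf_power:
  fixes G :: "real \<Rightarrow> real" and k :: nat and s t :: real
  assumes k: "1 \<le> k" and st: "s < t" and G_mono: "mono G" and G_cont: "continuous_on UNIV G"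
    and Gt: "G t < 1" and R_st: "Rfun G s < Rfun G t"
  shows "cond_cdf G k s t x = cdf (power_distribution (Rfun G s) (Rfun G t) k) (clamped_Rfun G s t x)"
    and "continuous_on UNIV (cond_cdf G k s t)"
    and "mono (cond_cdf G k s t)"
    and "x \<le> s \<Longrightarrow> cond_cdf G k s t x = 0"
    and "t \<le> x \<Longrightarrow> cond_cdf G k s t x = 1"
proof -
  define a b where "a = Rfun G s" and "b = Rfun G t"
  note clamp = clamped_Rfun[OF G_mono G_cont Gt less_imp_le[OF st], folded a_def b_def]
  have F_eq: "cond_cdf G k s t x = ((clamped_Rfun G s t x - a) / (b - a)) ^ k" for x
    by (simp add: cond_cdf_def clamped_Rfun_def a_def b_def)
  show "cond_cdf G k s t x = cdf (power_distribution (Rfun G s) (Rfun G t) k) (clamped_Rfun G s t x)"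
    using clamp(3,4)[of x] R_st power_distribution_cdf(2)[OF _ k]
    by (simp add: F_eq power_cdf_def a_def b_def)
  show "continuous_on UNIV (cond_cdf G k s t)"
    unfolding F_eq[abs_def] using R_st by (intro continuous_intros clamp(1)) (simp add: a_def b_def)
  show "mono (cond_cdf G k s t)"
    unfolding F_eq[abs_def] using monoD[OF clamp(2)] clamp(3) R_st
    by (intro monoI power_mono divide_right_mono) (auto simp: a_def b_def)
  show "x \<le> s \<Longrightarrow> cond_cdf G k s t x = 0"
    using k by (simp add: F_eq clamped_Rfun_def a_def)
  show "t \<le> x \<Longrightarrow> cond_cdf G k s t x = 1"
    using st R_st by (simp add: F_eq clamped_Rfun_def a_def b_def)
qed

lemma cond_distribution:
  fixes G :: "real \<Rightarrow> real" and k :: nat and s t :: real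
  assumes k: "1 \<le> k" and st: "s < t" and G_mono: "mono G" and G_cont: "continuous_on UNIV G"
    and Gt: "G t < 1" and R_st: "Rfun G s < Rfun G t"
  shows "real_distribution (interval_measure (cond_cdf G k s t))"
    and "distr (interval_measure (cond_cdf G k s t)) borel (clamped_Rfun G s t)
           = power_distribution (Rfun G s) (Rfun G t) k"
    and "AE x in interval_measure (cond_cdf G k s t). s < x \<and> x < t"
proof -
  define F where "F = cond_cdf G k s t"
  note F = cond_cdf_power[OF k st G_mono G_cont Gt R_st, folded F_def]
  note clamp = clamped_Rfun[OF G_mono G_cont Gt less_imp_le[OF st]]
  have F_mono: "F x \<le> F y" if "x \<le> y" for x y using monoD[OF F(3) that] .
  have F_rc: "continuous (at_right x) F" for x
    using F(2) by (simp add: continuous_on_eq_continuous_at continuous_at_imp_continuous_at_within)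
  have F_bot: "(F \<longlongrightarrow> 0) at_bot"
    by (rule tendsto_eventually) (auto simp: eventually_at_bot_linorder intro!: exI[of _ s] F(4))
  have F_top: "(F \<longlongrightarrow> 1) at_top"
    by (rule tendsto_eventually) (auto simp: eventually_at_top_linorder intro!: exI[of _ t] F(5))
  show "real_distribution (interval_measure (cond_cdf G k s t))"
    unfolding F_def[symmetric] using F_mono F_rc F_bot F_top by (rule real_distribution_interval_measure)
  then interpret m: real_distribution "interval_measure F" by (simp add: F_def)
  show "distr (interval_measure (cond_cdf G k s t)) borel (clamped_Rfun G s t)
          = power_distribution (Rfun G s) (Rfun G t) k"
    unfolding F_def[symmetric]
    by (rule distr_interval_measure_comp[OF power_distribution_cdf(1)[OF R_st k] clamp(1,2) F(1)
          F_rc F_bot F_top])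
  have "measure (interval_measure F) {s<..t} = 1"
    using st F_mono F_rc by (subst measure_interval_measure_Ioc) (auto simp: F(4,5))
  moreover have "measure (interval_measure F) {t} = 0"
    using emeasure_interval_measure_Icc[of t t F] F_mono F(2) by (simp add: measure_def)
  moreover have "{s<..<t} = {s<..t} - {t}" and "{s<..t} \<inter> {t} = {t}" using st by auto
  ultimately have "m.prob {s<..<t} = 1"
    by (simp add: m.finite_measure_Diff')
  then show "AE x in interval_measure (cond_cdf G k s t). s < x \<and> x < t"
    unfolding F_def[symmetric] by (rule m.AE_prob_1[THEN AE_mp]) auto
qed

lemma cond_exp_R_scale:
  fixes G g h :: "real \<Rightarrow> real" and k :: nat and s t :: real
  assumes k: "1 \<le> k" and st: "s < t" and G_mono: "mono G" and G_cont: "continuous_on UNIV G"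
    and Gt: "G t < 1" and R_st: "Rfun G s < Rfun G t"
    and h_cont: "continuous_on {Rfun G s..Rfun G t} h"
    and g_eq: "\<And>x. s < x \<Longrightarrow> x < t \<Longrightarrow> g x = h (Rfun G x)"
  shows "cond_exp G k g s t
           = integral {Rfun G s..Rfun G t} (\<lambda>r. power_pdf (Rfun G s) (Rfun G t) k r * h r)"
proof -
  define a b m where "a = Rfun G s" and "b = Rfun G t" and "m = interval_measure (cond_cdf G k s t)"
  define \<phi> where "\<phi> = clamped_Rfun G s t"
  note dist = cond_distribution[OF k st G_mono G_cont Gt R_st, folded a_def b_def m_def \<phi>_def]
  note clamp = clamped_Rfun[OF G_mono G_cont Gt less_imp_le[OF st], folded \<phi>_def]
  interpret m: real_distribution m by (fact dist(1))
  define hc where "hc r = h (max a (min r b))" for r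
  have hc_cont: "continuous_on UNIV hc"
    unfolding hc_def using R_st
    by (intro continuous_on_compose2[OF h_cont[folded a_def b_def]])
      (auto simp: a_def b_def intro!: continuous_intros)
  then have hc_meas[measurable]: "hc \<in> borel_measurable borel"
    by (rule borel_measurable_continuous_onI)
  have \<phi>_meas[measurable]: "\<phi> \<in> borel_measurable borel"
    using clamp(1) by (rule borel_measurable_continuous_onI)
  have g_hc: "g x = hc (\<phi> x)" if "s < x" "x < t" for x
    using that g_eq[OF that] clamp(3,4,5)[of x] by (simp add: hc_def a_def b_def)
  have "cond_exp G k g s t = (\<integral>x. indicator {s<..<t} x * g x \<partial>m)"
    by (simp add: cond_exp_def set_lebesgue_integral_def m_def)
  also have "\<dots> = (\<integral>x. indicator {s<..<t} x * hc (\<phi> x) \<partial>m)"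
    by (intro Bochner_Integration.integral_cong) (auto simp: g_hc indicator_def)
  also have "\<dots> = (\<integral>x. hc (\<phi> x) \<partial>m)"
    using dist(3) by (intro integral_cong_AE) (auto simp: m_def)
  also have "\<dots> = (\<integral>r. hc r \<partial>power_distribution a b k)"
    unfolding dist(2)[symmetric] by (rule integral_distr[symmetric]) auto
  also have "\<dots> = (\<integral>r. (indicator {a..b} r * power_pdf a b k r) * hc r \<partial>lborel)"
    unfolding power_distribution_def using R_st power_density_nonneg[of a b]
    by (subst integral_density) (auto simp: power_pdf_def a_def b_def intro!: AE_I2)
  also have "\<dots> = (LINT r:{a..b}|lborel. power_pdf a b k r * hc r)"
    unfolding set_lebesgue_integral_def by (intro Bochner_Integration.integral_cong) auto
  also have "\<dots> = integral {a..b} (\<lambda>r. power_pdf a b k r * hc r)"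
    using R_st
    by (intro set_borel_integral_eq_integral borel_integrable_atLeastAtMost')
      (auto simp: power_pdf_def a_def b_def intro!: continuous_intros continuous_on_subset[OF hc_cont])
  also have "\<dots> = integral {a..b} (\<lambda>r. power_pdf a b k r * h r)"
    by (intro integral_cong) (auto simp: hc_def)
  finally show ?thesis by (simp add: a_def b_def)
qed

text \<open>If R(s) = R(t) the conditional distribution function vanishes identically, so the
  conditional expectation is 0; used to show that the identity forces R to increase strictly.\<close>

lemma cond_exp_degenerate:
  assumes k: "1 \<le> k" and R_eq: "Rfun G s = Rfun G t"
  shows "cond_exp G k g s t = 0"
proof -
  have F0: "cond_cdf G k s t = (\<lambda>x. 0)"
    using k R_eq by (auto simp: cond_cdf_def fun_eq_iff)
  have "emeasure (interval_measure (\<lambda>x::real. 0::real)) UNIV = ennreal 0"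
    by (rule interval_measure_UNIV) auto
  then have "AE x in interval_measure (\<lambda>x. 0). indicator {s<..<t} x *\<^sub>R g x = 0"
    by (intro emeasure_0_AE) simp
  then show ?thesis
    unfolding cond_exp_def F0 set_lebesgue_integral_def by (rule integral_eq_zero_AE)
qed

lemma kernel_powr_identities:
  fixes x :: real and k :: nat
  assumes x: "0 < x"
  defines "H \<equiv> x powr (- 1 / (real k + 1))"
  shows "x = 1 / H ^ (k + 1)"
    and "x powr (real k / (real k + 1)) = 1 / H ^ k"
    and "x powr (1 / (real k + 1)) = 1 / H"
proof -
  have pow: "H ^ n = x powr (- real n / (real k + 1))" for n
    unfolding H_def using x by (simp add: powr_realpow[symmetric] powr_powr)
  have "- real (k + 1) / (real k + 1) = - 1"
    by (simp add: field_simps)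
  then show "x = 1 / H ^ (k + 1)"
    unfolding pow using x by (simp add: powr_minus_divide)
  show "x powr (real k / (real k + 1)) = 1 / H ^ k"
    unfolding pow using x by (simp add: powr_minus_divide)
  show "x powr (1 / (real k + 1)) = 1 / H"
    using pow[of 1] x by (simp add: powr_minus_divide)
qed

text \<open>The antiderivative behind the "if" direction: for L(r) = \<alpha> + \<beta> r, the derivative of
  ((r - a)/L(r))^k is k (r - a)^(k-1) L(a)/L(r)^(k+1), since L(r) - \<beta> (r - a) = L(a).\<close>

lemma affine_kernel_antiderivative:
  fixes \<alpha> \<beta> a r :: real and k :: nat and S :: "real set"
  assumes k: "1 \<le> k" and Lr: "\<alpha> + \<beta> * r \<noteq> 0"
  shows "((\<lambda>r. ((r - a) / (\<alpha> + \<beta> * r)) ^ k) has_real_derivative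
           real k * (r - a) ^ (k - 1) * (\<alpha> + \<beta> * a) / (\<alpha> + \<beta> * r) ^ (k + 1)) (at r within S)"
proof -
  define L where "L r = \<alpha> + \<beta> * r" for r
  have "((\<lambda>r. r - a) has_real_derivative 1) (at r within S)"
    and "(L has_real_derivative \<beta>) (at r within S)"
    unfolding L_def by (auto intro!: derivative_eq_intros)
  from DERIV_divide[OF this Lr[folded L_def]]
  have "((\<lambda>r. (r - a) / L r) has_real_derivative L a / (L r * L r)) (at r within S)"
    by (simp add: L_def algebra_simps)
  from DERIV_power[OF this, of k]
  have "((\<lambda>r. ((r - a) / L r) ^ k) has_real_derivative
      real k * (L a / (L r * L r) * ((r - a) / L r) ^ (k - Suc 0))) (at r within S)"
    by simp
  moreover have "real k * (L a / (L r * L r) * ((r - a) / L r) ^ (k - Suc 0))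
      = real k * (r - a) ^ (k - 1) * L a / L r ^ (k + 1)"
    using k Lr by (cases k) (simp_all add: L_def power_divide field_simps)
  ultimately show ?thesis by (simp add: L_def)
qed

lemma affine_kernel_integral:
  fixes \<alpha> \<beta> a b :: real and k :: nat
  assumes ab: "a < b" and k: "1 \<le> k"
    and pos_a: "0 < \<alpha> + \<beta> * a" and pos_b: "0 < \<alpha> + \<beta> * b"
  shows "integral {a..b} (\<lambda>r. power_pdf a b k r * (1 / (\<alpha> + \<beta> * r)) ^ (k + 1))
           = 1 / ((\<alpha> + \<beta> * b) ^ k * (\<alpha> + \<beta> * a))"
proof -
  define L where "L r = \<alpha> + \<beta> * r" for r
  have L_pos: "0 < L r" if "a \<le> r" "r \<le> b" for r
  proof -
    have "L r = ((b - r) * L a + (r - a) * L b) / (b - a)"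
      using ab by (simp add: L_def field_simps)
    also have "\<dots> > 0"
      using that ab pos_a pos_b by (cases "r = a") (auto simp: L_def intro!: divide_pos_pos add_nonneg_pos)
    finally show ?thesis .
  qed
  define \<Phi> where "\<Phi> r = ((r - a) / L r) ^ k / ((b - a) ^ k * L a)" for r
  have "((\<lambda>r. power_pdf a b k r * (1 / L r) ^ (k + 1)) has_integral (\<Phi> b - \<Phi> a)) {a..b}"
  proof (rule fundamental_theorem_of_calculus)
    fix r assume "r \<in> {a..b}"
    then have Lr: "L r \<noteq> 0" using L_pos by force
    have "(\<Phi> has_real_derivative
        real k * (r - a) ^ (k - 1) * L a / L r ^ (k + 1) / ((b - a) ^ k * L a)) (at r within {a..b})"
      unfolding \<Phi>_def L_def
      by (intro DERIV_cdivide affine_kernel_antiderivative k) (use Lr in \<open>simp add: L_def\<close>)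
    moreover have "real k * (r - a) ^ (k - 1) * L a / L r ^ (k + 1) / ((b - a) ^ k * L a)
        = power_pdf a b k r * (1 / L r) ^ (k + 1)"
      using pos_a by (simp add: power_pdf_def power_one_over L_def)
    ultimately show "(\<Phi> has_vector_derivative power_pdf a b k r * (1 / L r) ^ (k + 1)) (at r within {a..b})"
      by (simp add: has_real_derivative_iff_has_vector_derivative)
  qed (use ab in simp)
  moreover have "\<Phi> b - \<Phi> a = 1 / (L b ^ k * L a)"
    using ab L_pos[of b] k by (simp add: \<Phi>_def power_divide)
  ultimately show ?thesis
    unfolding L_def by (simp add: integral_unique)
qed

context
  fixes J :: "real set" and h :: "real \<Rightarrow> real" and k :: nat
  assumes J_open: "open J" and J_interval: "is_interval J"
    and h_cont: "continuous_on J h" and h_pos: "\<And>u. u \<in> J \<Longrightarrow> 0 < h u" and k: "1 \<le> k"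
    and kernel_identity: "\<And>a u. a \<in> J \<Longrightarrow> u \<in> J \<Longrightarrow> a < u \<Longrightarrow>
          integral {a..u} (\<lambda>r. power_pdf a u k r * h r)
            = h u powr (real k / (real k + 1)) * h a powr (1 / (real k + 1))"
begin

lemma open_interval_neighbours:
  assumes "u \<in> J"
  obtains v w where "v \<in> J" "w \<in> J" "v < u" "u < w"
proof -
  obtain e where "0 < e" "ball u e \<subseteq> J" using openE[OF J_open assms] by blast
  then have "u - e / 2 \<in> J" "u + e / 2 \<in> J" by (auto simp: dist_real_def)
  then show ?thesis using that \<open>0 < e\<close> by simp
qed

lemma weighted_integral_eq:
  assumes "a \<in> J" "u \<in> J" "a < u"
  shows "integral {a..u} (\<lambda>r. real k * (r - a) ^ (k - 1) * h r)
           = (u - a) ^ k * h u powr (real k / (real k + 1)) * h a powr (1 / (real k + 1))"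
proof -
  have "integral {a..u} (\<lambda>r. power_pdf a u k r * h r)
      = integral {a..u} (\<lambda>r. (1 / (u - a) ^ k) *\<^sub>R (real k * (r - a) ^ (k - 1) * h r))"
    by (intro integral_cong) (simp add: power_pdf_def)
  then show ?thesis
    using kernel_identity[OF assms] assms(3) by (simp add: field_simps)
qed

lemma weighted_integral_deriv:
  assumes a: "a \<in> J" and u: "u \<in> J" and au: "a < u"
  shows "((\<lambda>v. integral {a..v} (\<lambda>r. real k * (r - a) ^ (k - 1) * h r))
           has_real_derivative real k * (u - a) ^ (k - 1) * h u) (at u)"
proof -
  obtain w where w: "w \<in> J" "u < w" using open_interval_neighbours[OF u] by blast
  have "{a..w} \<subseteq> J" using mem_is_interval_1_I[OF J_interval a w(1)] by auto
  then have "continuous_on {a..w} (\<lambda>r. real k * (r - a) ^ (k - 1) * h r)"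
    by (intro continuous_intros continuous_on_subset[OF h_cont])
  then have "((\<lambda>v. integral {a..v} (\<lambda>r. real k * (r - a) ^ (k - 1) * h r))
      has_real_derivative real k * (u - a) ^ (k - 1) * h u) (at u within {a..w})"
    by (rule integral_has_real_derivative) (use au w in auto)
  then show ?thesis using au w by (simp add: at_within_Icc_at)
qed

text \<open>\<psi> = h^(k/(k+1)) is differentiable: near u0 it equals P_a0(v)/((v - a0)^k \<phi>(a0)) for any
  fixed a0 < u0 in J.\<close>

lemma upper_power_differentiable:
  assumes u0: "u0 \<in> J"
  obtains D where "((\<lambda>v. h v powr (real k / (real k + 1))) has_real_derivative D) (at u0)"
proof -
  obtain a0 where a0: "a0 \<in> J" "a0 < u0" using open_interval_neighbours[OF u0] by blast
  define c where "c = h a0 powr (1 / (real k + 1))"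
  have c: "0 < c" using h_pos[OF a0(1)] by (simp add: c_def)
  have "((\<lambda>v. (v - a0) ^ k * c) has_real_derivative real k * (u0 - a0) ^ (k - 1) * c) (at u0)"
    by (auto intro!: derivative_eq_intros)
  from DERIV_divide[OF weighted_integral_deriv[OF a0(1) u0 a0(2)] this]
  obtain E where E: "((\<lambda>v. integral {a0..v} (\<lambda>r. real k * (r - a0) ^ (k - 1) * h r)
      / ((v - a0) ^ k * c)) has_real_derivative E) (at u0)"
    using a0 c by auto
  have "((\<lambda>v. h v powr (real k / (real k + 1))) has_real_derivative E) (at u0)"
  proof (rule has_field_derivative_transform_within_open[OF E _ _])
    show "open (J \<inter> {a0<..})" using J_open by auto
    show "u0 \<in> J \<inter> {a0<..}" using u0 a0 by auto
    fix v assume "v \<in> J \<inter> {a0<..}"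
    then show "integral {a0..v} (\<lambda>r. real k * (r - a0) ^ (k - 1) * h r) / ((v - a0) ^ k * c)
        = h v powr (real k / (real k + 1))"
      using weighted_integral_eq[OF a0(1), of v] c by (auto simp: c_def)
  qed
  then show ?thesis using that by blast
qed

text \<open>Differentiating the factorisation of P_a at u0 by the product rule and comparing with the
  fundamental theorem of calculus gives k h(u0) = \<phi>(a) (k \<psi>(u0) + (u0 - a) \<psi>'(u0)).\<close>

lemma kernel_identity_derivative:
  assumes u0: "u0 \<in> J" and a: "a \<in> J" "a < u0"
    and D: "((\<lambda>v. h v powr (real k / (real k + 1))) has_real_derivative D) (at u0)"
  shows "real k * h u0
           = h a powr (1 / (real k + 1)) * (real k * h u0 powr (real k / (real k + 1)) + (u0 - a) * D)"
proof -
  define \<psi> where "\<psi> v = h v powr (real k / (real k + 1))" for v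
  define \<phi> where "\<phi> = h a powr (1 / (real k + 1))"
  define P where "P v = integral {a..v} (\<lambda>r. real k * (r - a) ^ (k - 1) * h r)" for v
  have D\<psi>: "(\<psi> has_real_derivative D) (at u0)" using D by (simp add: \<psi>_def[abs_def])
  have "((\<lambda>v. (v - a) ^ k * \<psi> v * \<phi>) has_real_derivative
      (real k * (u0 - a) ^ (k - 1) * \<psi> u0 + (u0 - a) ^ k * D) * \<phi>) (at u0)"
    by (auto intro!: derivative_eq_intros D\<psi> simp: algebra_simps)
  then have "(P has_real_derivative (real k * (u0 - a) ^ (k - 1) * \<psi> u0 + (u0 - a) ^ k * D) * \<phi>) (at u0)"
  proof (rule has_field_derivative_transform_within_open)
    show "open (J \<inter> {a<..})" using J_open by auto
    show "u0 \<in> J \<inter> {a<..}" using u0 a by auto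
  qed (use weighted_integral_eq[OF a(1)] in \<open>auto simp: P_def \<psi>_def \<phi>_def\<close>)
  from DERIV_unique[OF weighted_integral_deriv[OF a(1) u0 a(2), folded P_def] this]
  have "(u0 - a) ^ (k - 1) * (real k * h u0) = (u0 - a) ^ (k - 1) * (\<phi> * (real k * \<psi> u0 + (u0 - a) * D))"
    using k by (cases k) (simp_all add: \<psi>_def algebra_simps)
  then show ?thesis using a by (simp add: \<psi>_def \<phi>_def)
qed

lemma kernel_identity_local_affine:
  assumes u0: "u0 \<in> J"
  shows "\<exists>\<alpha> \<beta>. \<forall>a\<in>J. a < u0 \<longrightarrow> h a powr (- 1 / (real k + 1)) = \<alpha> + \<beta> * a"
proof -
  define \<psi>0 where "\<psi>0 = h u0 powr (real k / (real k + 1))"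
  obtain D where D: "((\<lambda>v. h v powr (real k / (real k + 1))) has_real_derivative D) (at u0)"
    using upper_power_differentiable[OF u0] by blast
  have "h a powr (- 1 / (real k + 1))
      = (real k * \<psi>0 + u0 * D) / (real k * h u0) + (- D / (real k * h u0)) * a"
    if a: "a \<in> J" "a < u0" for a
  proof -
    have "h a powr (- 1 / (real k + 1)) = 1 / h a powr (1 / (real k + 1))"
      using kernel_powr_identities(3)[OF h_pos[OF a(1)], of k] h_pos[OF a(1)] by simp
    also have "\<dots> = (real k * \<psi>0 + (u0 - a) * D) / (real k * h u0)"
      using kernel_identity_derivative[OF u0 a D] h_pos[OF a(1)] h_pos[OF u0] k
      by (simp add: \<psi>0_def field_simps)
    also have "\<dots> = (real k * \<psi>0 + u0 * D) / (real k * h u0) + (- D / (real k * h u0)) * a"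
      using h_pos[OF u0] k by (simp add: field_simps)
    finally show ?thesis .
  qed
  then show ?thesis by blast
qed

lemma kernel_identity_affine:
  "\<exists>\<alpha> \<beta>. \<forall>u\<in>J. h u powr (- 1 / (real k + 1)) = \<alpha> + \<beta> * u"
proof (cases "J = {}")
  case False
  define H where "H u = h u powr (- 1 / (real k + 1))" for u
  obtain p where p: "p \<in> J" using False by blast
  obtain q where q: "q \<in> J" "p < q" using open_interval_neighbours[OF p] by blast
  define \<beta> where "\<beta> = (H q - H p) / (q - p)"
  define \<alpha> where "\<alpha> = H p - \<beta> * p"
  have "H y = \<alpha> + \<beta> * y" if y: "y \<in> J" for y
  proof -
    have "max y q \<in> J" using y q by (simp add: max_def)
    then obtain u0 where u0: "u0 \<in> J" "max y q < u0" using open_interval_neighbours by metis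
    obtain \<alpha>' \<beta>' where aff: "\<And>a. a \<in> J \<Longrightarrow> a < u0 \<Longrightarrow> H a = \<alpha>' + \<beta>' * a"
      using kernel_identity_local_affine[OF u0(1)] unfolding H_def by blast
    have "H y = \<alpha>' + \<beta>' * y" "H p = \<alpha>' + \<beta>' * p" "H q = \<alpha>' + \<beta>' * q"
      using aff y p q u0 by auto
    moreover from this have "\<beta> = \<beta>'" using q(2) by (simp add: \<beta>_def field_simps)
    ultimately show ?thesis by (simp add: \<alpha>_def algebra_simps)
  qed
  then show ?thesis unfolding H_def by blast
qed simp

end

lemma strict_mono_continuous_image:
  fixes f :: "real \<Rightarrow> real" and I :: "real set"
  assumes I_open: "open I" and I_interval: "is_interval I"
    and f_strict: "strict_mono_on I f" and f_cont_on: "continuous_on I f"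
  shows "is_interval (f ` I)" and "open (f ` I)"
    and "\<And>x. x \<in> I \<Longrightarrow> isCont (inv_into I f) (f x)"
proof -
  have f_cont: "isCont f x" if "x \<in> I" for x
    using f_cont_on I_open that by (simp add: continuous_on_eq_continuous_at)
  show image_interval: "is_interval (f ` I)"
    unfolding is_interval_connected_1 using I_interval f_cont_on
    by (intro connected_continuous_image is_interval_connected)
  have cball: "\<exists>d>0. cball x d \<subseteq> I" if x: "x \<in> I" for x
  proof -
    obtain e where "0 < e" "ball x e \<subseteq> I" using openE[OF I_open x] by blast
    then show ?thesis by (intro exI[of _ "e / 2"]) auto
  qed
  show "open (f ` I)"
    unfolding open_contains_ball
  proof
    fix y assume "y \<in> f ` I"
    then obtain x where x: "x \<in> I" "y = f x" by blast
    obtain d where d: "0 < d" "cball x d \<subseteq> I" using cball[OF x(1)] by blast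
    then have I_ends: "x - d \<in> I" "x + d \<in> I" by (auto simp: dist_real_def)
    have "f (x - d) < f x" "f x < f (x + d)"
      using strict_mono_onD[OF f_strict] I_ends x(1) d(1) by auto
    moreover have "{f (x - d)..f (x + d)} \<subseteq> f ` I"
    proof
      fix v assume v: "v \<in> {f (x - d)..f (x + d)}"
      show "v \<in> f ` I"
        by (rule mem_is_interval_1_I[OF image_interval, of "f (x - d)" "f (x + d)"])
          (use v I_ends in auto)
    qed
    moreover have "ball y (min (f x - f (x - d)) (f (x + d) - f x)) \<subseteq> {f (x - d)..f (x + d)}"
      using x(2) by (auto simp: dist_real_def abs_less_iff)
    ultimately show "\<exists>e>0. ball y e \<subseteq> f ` I"
      by (intro exI[of _ "min (f x - f (x - d)) (f (x + d) - f x)"]) auto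
  qed
  show "isCont (inv_into I f) (f x)" if x: "x \<in> I" for x
  proof -
    obtain d where d: "0 < d" "cball x d \<subseteq> I" using cball[OF x] by blast
    have near: "z \<in> I" if "\<bar>z - x\<bar> \<le> d" for z using that d by (auto simp: dist_real_def)
    show ?thesis
      by (rule isCont_inverse_function[OF d(1)])
        (use strict_mono_on_imp_inj_on[OF f_strict] near f_cont in auto)
  qed
qed

locale continuous_cdf =
  fixes G :: "real \<Rightarrow> real"
  assumes G_mono: "mono G"
    and G_bot: "(G \<longlongrightarrow> 0) at_bot"
    and G_top: "(G \<longlongrightarrow> 1) at_top"
    and G_cont: "continuous_on UNIV G"
begin

abbreviation supp :: "real set" where
  "supp \<equiv> {y. lG G < ereal y \<and> ereal y < rG G}"

lemma lG_less_iff: "lG G < ereal y \<longleftrightarrow> (\<exists>z<y. 0 < G z)"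
  unfolding lG_def by (auto simp: Inf_less_iff)

lemma less_rG_iff: "ereal y < rG G \<longleftrightarrow> (\<exists>z>y. G z < 1)"
  unfolding rG_def by (auto simp: less_Sup_iff)

lemma G_nonneg: "0 \<le> G y"
proof (rule tendsto_upperbound[OF G_bot])
  show "\<forall>\<^sub>F z in at_bot. G z \<le> G y"
    unfolding eventually_at_bot_linorder using monoD[OF G_mono] by (intro exI[of _ y]) auto
qed simp

lemma G_less_1: "y \<in> supp \<Longrightarrow> G y < 1"
proof -
  assume "y \<in> supp"
  then obtain z where "y < z" "G z < 1" by (auto simp: less_rG_iff)
  then show "G y < 1" using monoD[OF G_mono, of y z] by simp
qed

lemma Rfun_continuous_on: "continuous_on supp (Rfun G)"
  using Rfun_mono_isCont(2)[OF G_mono G_cont G_less_1] by (blast intro: continuous_at_imp_continuous_on)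

lemma supp_open: "open supp"
proof -
  have "supp = (\<Union>z\<in>{z. 0 < G z}. {z<..}) \<inter> (\<Union>z\<in>{z. G z < 1}. {..<z})"
    by (auto simp: lG_less_iff less_rG_iff)
  then show ?thesis by (auto intro!: open_Int open_UN)
qed

lemma supp_interval: "is_interval supp"
  unfolding is_interval_1 by (auto simp: lG_less_iff less_rG_iff) (meson le_less_trans less_le_trans)+

lemma G_attains: "0 < c \<Longrightarrow> c < 1 \<Longrightarrow> \<exists>y. G y = c"
proof -
  assume c: "0 < c" "c < 1"
  obtain x1 where x1: "G x1 < c"
    using order_tendstoD(2)[OF G_bot c(1)] by (auto simp: eventually_at_bot_linorder)
  obtain x2 where x2: "c < G x2"
    using order_tendstoD(1)[OF G_top c(2)] by (auto simp: eventually_at_top_linorder)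
  have "x1 \<le> x2" using x1 x2 monoD[OF G_mono, of x2 x1] by force
  then show ?thesis using IVT'[of G x1 c x2] x1 x2 continuous_on_subset[OF G_cont] by force
qed

text \<open>By the intermediate value theorem G takes every value in (0, 1), so the support is a
  nondegenerate interval.\<close>

lemma supp_two_points: "\<exists>p q. p \<in> supp \<and> q \<in> supp \<and> p < q"
proof -
  obtain y1 y2 y3 where y: "G y1 = 1/4" "G y2 = 1/2" "G y3 = 3/4"
    using G_attains[of "1/4"] G_attains[of "1/2"] G_attains[of "3/4"] by auto
  have "y1 < y2" "y2 < y3" using y monoD[OF G_mono, of y2 y1] monoD[OF G_mono, of y3 y2] by force+
  then have "y2 \<in> supp" using y by (auto simp: lG_less_iff less_rG_iff)
  moreover obtain e where "0 < e" "ball y2 e \<subseteq> supp"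
    using openE[OF supp_open \<open>y2 \<in> supp\<close>] by blast
  moreover from \<open>0 < e\<close> have "y2 + e / 2 \<in> ball y2 e" by (simp add: dist_real_def)
  ultimately show ?thesis by (intro exI[of _ y2] exI[of _ "y2 + e / 2"]) auto
qed

lemma at_lG_nontrivial: "at_lG G \<noteq> bot"
  unfolding at_lG_def by (auto simp: trivial_limit_at_bot_linorder)

lemma eventually_supp_at_lG: "eventually (\<lambda>y. y \<in> supp) (at_lG G)"
proof -
  obtain q where q: "q \<in> supp" using supp_two_points by blast
  have "eventually (\<lambda>y. lG G < ereal y \<and> y < q) (at_lG G)"
  proof (cases "lG G")
    case (real l)
    then show ?thesis using q unfolding at_lG_def
      by (auto simp: eventually_at_right_field intro!: exI[of _ q])
  next
    case MInf
    then show ?thesis unfolding at_lG_def by (auto simp: eventually_at_bot_linorder intro!: exI[of _ "q - 1"])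
  next
    case PInf
    then show ?thesis using q by simp
  qed
  then show ?thesis
  proof (rule eventually_mono)
    fix y assume y: "lG G < ereal y \<and> y < q"
    then have "ereal y < rG G" using q order.strict_trans[of "ereal y" "ereal q" "rG G"] by simp
    then show "y \<in> supp" using y by simp
  qed
qed

lemma Rfun_at_lG: "(Rfun G \<longlongrightarrow> 0) (at_lG G)"
proof -
  have G_lim: "(G \<longlongrightarrow> 0) (at_lG G)"
  proof (cases "lG G")
    case (real l)
    have "G z = 0" if "z < l" for z
      using that G_nonneg[of z] real lG_less_iff[of l] by force
    then have "G l \<le> 0"
      using G_cont by (intro tendsto_upperbound[of G "G l" "at_left l"])
        (auto simp: continuous_on_eq_continuous_at isCont_def filterlim_at_split
          eventually_at_left_field intro!: exI[of _ "l - 1"])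
    moreover have "(G \<longlongrightarrow> G l) (at_right l)"
      using G_cont by (simp add: continuous_on_eq_continuous_at isCont_def filterlim_at_split)
    ultimately have "(G \<longlongrightarrow> 0) (at_right l)" using G_nonneg[of l] by simp
    then show ?thesis unfolding at_lG_def using real by simp
  next
    case MInf
    then show ?thesis unfolding at_lG_def using G_bot by simp
  next
    case PInf
    then show ?thesis using supp_two_points by auto
  qed
  have "((\<lambda>y. - ln (1 - G y)) \<longlongrightarrow> - ln (1 - 0)) (at_lG G)"
    by (intro tendsto_intros G_lim) simp
  then show ?thesis by (simp add: Rfun_def[abs_def])
qed

end

context continuous_cdf
begin

lemma supp_pair_iff:
  "(lG G < ereal s \<and> s < t \<and> ereal t < rG G) \<longleftrightarrow> (s \<in> supp \<and> t \<in> supp \<and> s < t)"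
  using order.strict_trans[of "lG G" "ereal s" "ereal t"] order.strict_trans[of "ereal s" "ereal t" "rG G"]
  by auto

text \<open>"If": for G of the stated form, g(y)^(-1/(k+1)) = \<tau> + R(y)/c on the support, so
  g = h \<circ> R with h(r) = (\<tau> + r/c)^(-(k+1)) and the conditional expectation is computed by
  the change of variables and the explicit kernel integral.\<close>

lemma sufficiency:
  fixes g :: "real \<Rightarrow> real" and k :: nat and c \<tau> s t :: real
  assumes k: "1 \<le> k"
    and g_pos: "\<And>y. y \<in> supp \<Longrightarrow> 0 < g y"
    and g_decr: "strict_antimono_on supp g"
    and c: "0 < c"
    and G_form: "\<And>y. y \<in> supp \<Longrightarrow> G y = 1 - exp (- c * (g y powr (- 1 / (real k + 1)) - \<tau>))"
    and s: "s \<in> supp" and t: "t \<in> supp" and st: "s < t"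
  shows "cond_exp G k g s t = g t powr (real k / (real k + 1)) * g s powr (1 / (real k + 1))"
proof -
  define H where "H y = g y powr (- 1 / (real k + 1))" for y
  define h where "h r = (1 / (\<tau> + (1 / c) * r)) ^ (k + 1)" for r
  have H_R: "\<tau> + (1 / c) * Rfun G y = H y" if "y \<in> supp" for y
    using G_form[OF that] c by (simp add: Rfun_def H_def)
  have H_pos: "0 < H y" if "y \<in> supp" for y
    using g_pos[OF that] by (simp add: H_def)
  have "H s < H t"
    unfolding H_def using g_pos[OF t] monotone_onD[OF g_decr s t st]
    by (intro powr_less_mono2_neg) auto
  moreover have "Rfun G y = c * H y - c * \<tau>" if "y \<in> supp" for y
    using H_R[OF that] c by (simp add: field_simps)
  ultimately have R_st: "Rfun G s < Rfun G t"
    using s t mult_strict_left_mono[OF \<open>H s < H t\<close> c] by simp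
  have between: "x \<in> supp" if "s \<le> x" "x \<le> t" for x
    by (rule mem_is_interval_1_I[OF supp_interval s t that])
  have g_h: "g x = h (Rfun G x)" if "s < x" "x < t" for x
    using between[of x] that kernel_powr_identities(1)[OF g_pos, of x k] H_R[of x]
    by (simp add: h_def H_def power_one_over)
  have h_cont: "continuous_on {Rfun G s..Rfun G t} h"
  proof -
    have "0 < \<tau> + (1 / c) * r" if "r \<in> {Rfun G s..Rfun G t}" for r
    proof -
      have "\<tau> + (1 / c) * Rfun G s \<le> \<tau> + (1 / c) * r" using that c by (simp add: divide_right_mono)
      then show ?thesis using H_R[OF s] H_pos[OF s] by linarith
    qed
    then show ?thesis
      unfolding h_def
      by (intro continuous_on_power continuous_on_divide continuous_on_add continuous_on_mult
          continuous_on_const continuous_on_id) force+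
  qed
  have "cond_exp G k g s t
      = integral {Rfun G s..Rfun G t} (\<lambda>r. power_pdf (Rfun G s) (Rfun G t) k r * h r)"
    by (rule cond_exp_R_scale[OF k st G_mono G_cont G_less_1[OF t] R_st h_cont g_h])
  also have "\<dots> = 1 / ((\<tau> + (1 / c) * Rfun G t) ^ k * (\<tau> + (1 / c) * Rfun G s))"
    unfolding h_def using R_st k H_R H_pos s t by (intro affine_kernel_integral) auto
  also have "\<dots> = 1 / H t ^ k * (1 / H s)"
    using H_R[OF s] H_R[OF t] by simp
  also have "\<dots> = g t powr (real k / (real k + 1)) * g s powr (1 / (real k + 1))"
    using kernel_powr_identities(2)[OF g_pos[OF t], of k] kernel_powr_identities(3)[OF g_pos[OF s], of k]
    by (simp add: H_def)
  finally show ?thesis .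
qed

text \<open>"Only if", first step: the identity rules out flat pieces of G inside its support, since on
  them the conditional expectation would vanish while the right-hand side is positive.\<close>

lemma Rfun_strict_mono_from_identity:
  fixes g :: "real \<Rightarrow> real" and k :: nat
  assumes k: "1 \<le> k" and g_pos: "\<And>y. y \<in> supp \<Longrightarrow> 0 < g y"
    and ident: "\<And>s t. s \<in> supp \<Longrightarrow> t \<in> supp \<Longrightarrow> s < t \<Longrightarrow>
          cond_exp G k g s t = g t powr (real k / (real k + 1)) * g s powr (1 / (real k + 1))"
  shows "strict_mono_on supp (Rfun G)"
proof (rule strict_mono_onI)
  fix s t assume s: "s \<in> supp" and t: "t \<in> supp" and st: "s < t"
  have "Rfun G s \<le> Rfun G t"
    using Rfun_mono_isCont(1)[OF G_mono G_cont G_less_1[OF t]] st by simp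
  moreover have "Rfun G s \<noteq> Rfun G t"
  proof
    assume "Rfun G s = Rfun G t"
    then have "cond_exp G k g s t = 0" by (rule cond_exp_degenerate[OF k])
    moreover have "0 < g t powr (real k / (real k + 1)) * g s powr (1 / (real k + 1))"
      using g_pos[OF s] g_pos[OF t] by simp
    ultimately show False using ident[OF s t st] by linarith
  qed
  ultimately show "Rfun G s < Rfun G t" by simp
qed

lemma R_scale_transfer:
  fixes g :: "real \<Rightarrow> real"
  assumes R_strict: "strict_mono_on supp (Rfun G)" and g_cont: "continuous_on supp g"
  defines "h \<equiv> g \<circ> inv_into supp (Rfun G)"
  shows "open (Rfun G ` supp)" and "is_interval (Rfun G ` supp)"
    and "\<And>y. y \<in> supp \<Longrightarrow> h (Rfun G y) = g y"
    and "continuous_on (Rfun G ` supp) h"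
proof -
  note image = strict_mono_continuous_image[OF supp_open supp_interval R_strict Rfun_continuous_on]
  show "open (Rfun G ` supp)" and "is_interval (Rfun G ` supp)" by (fact image(2,1))+
  show h_R: "h (Rfun G y) = g y" if "y \<in> supp" for y
    using that strict_mono_on_imp_inj_on[OF R_strict] by (simp add: h_def)
  show "continuous_on (Rfun G ` supp) h"
  proof (rule continuous_at_imp_continuous_on, rule ballI)
    fix u assume "u \<in> Rfun G ` supp"
    then obtain y where y: "y \<in> supp" "u = Rfun G y" by blast
    have "isCont g (inv_into supp (Rfun G) (Rfun G y))"
      using y(1) g_cont strict_mono_on_imp_inj_on[OF R_strict]
      by (simp add: continuous_on_eq_continuous_at[OF supp_open])
    with image(3)[OF y(1)] show "isCont h u"
      unfolding h_def y(2) by (rule continuous_at_compose)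
  qed
qed

text \<open>"Only if", main step: in the R-scale the identity is the kernel identity for h = g \<circ> R^(-1)
  on the open interval R(supp), hence g^(-1/(k+1)) is affine in R.\<close>

lemma reciprocal_root_affine_in_R:
  fixes g :: "real \<Rightarrow> real" and k :: nat
  assumes k: "1 \<le> k" and g_pos: "\<And>y. y \<in> supp \<Longrightarrow> 0 < g y"
    and g_cont: "continuous_on supp g"
    and ident: "\<And>s t. s \<in> supp \<Longrightarrow> t \<in> supp \<Longrightarrow> s < t \<Longrightarrow>
          cond_exp G k g s t = g t powr (real k / (real k + 1)) * g s powr (1 / (real k + 1))"
  shows "\<exists>\<alpha> \<beta>. \<forall>y\<in>supp. g y powr (- 1 / (real k + 1)) = \<alpha> + \<beta> * Rfun G y"
proof -
  have R_strict: "strict_mono_on supp (Rfun G)"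
    by (rule Rfun_strict_mono_from_identity[OF k g_pos ident])
  define J where "J = Rfun G ` supp"
  define h where "h = g \<circ> inv_into supp (Rfun G)"
  note transfer = R_scale_transfer[OF R_strict g_cont, folded J_def h_def]
  have h_pos: "0 < h u" if "u \<in> J" for u
    using that g_pos transfer(3) by (auto simp: J_def)
  have kernel_identity: "integral {a..u} (\<lambda>r. power_pdf a u k r * h r)
      = h u powr (real k / (real k + 1)) * h a powr (1 / (real k + 1))"
    if a: "a \<in> J" and u: "u \<in> J" and au: "a < u" for a u
  proof -
    obtain s x where s: "s \<in> supp" "a = Rfun G s" and x: "x \<in> supp" "u = Rfun G x"
      using a u by (auto simp: J_def)
    have sx: "s < x"
      using au s x strict_mono_onD[OF R_strict x(1) s(1)] by (cases x s rule: linorder_cases) auto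
    have "{a..u} \<subseteq> J"
    proof
      fix v assume "v \<in> {a..u}"
      then show "v \<in> J" using mem_is_interval_1_I[OF transfer(2) a u] by simp
    qed
    then have h_cont: "continuous_on {Rfun G s..Rfun G x} h"
      using s x continuous_on_subset[OF transfer(4)] by simp
    have g_h: "g y = h (Rfun G y)" if "s < y" "y < x" for y
      using transfer(3)[OF mem_is_interval_1_I[OF supp_interval s(1) x(1)]] that by simp
    have "cond_exp G k g s x = integral {a..u} (\<lambda>r. power_pdf a u k r * h r)"
      unfolding s(2) x(2) using au s x
      by (intro cond_exp_R_scale[OF k sx G_mono G_cont G_less_1[OF x(1)] _ h_cont g_h]) simp
    then show ?thesis using ident[OF s(1) x(1) sx] transfer(3) s x by simp
  qed
  obtain \<alpha> \<beta> where "\<forall>u\<in>J. h u powr (- 1 / (real k + 1)) = \<alpha> + \<beta> * u"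
    using kernel_identity_affine[OF transfer(1,2) transfer(4) h_pos k kernel_identity] by blast
  then show ?thesis using transfer(3) by (auto simp: J_def)
qed

lemma cdf_form_from_affine:
  fixes H :: "real \<Rightarrow> real" and \<alpha> \<beta> :: real
  assumes aff: "\<And>y. y \<in> supp \<Longrightarrow> H y = \<alpha> + \<beta> * Rfun G y"
    and H_incr: "strict_mono_on supp H"
  shows "0 < \<beta>" and "Lim (at_lG G) H = \<alpha>"
    and "\<And>y. y \<in> supp \<Longrightarrow> G y = 1 - exp (- (1 / \<beta>) * (H y - \<alpha>))"
proof -
  obtain p q where pq: "p \<in> supp" "q \<in> supp" "p < q" using supp_two_points by blast
  have "Rfun G p \<le> Rfun G q"
    using Rfun_mono_isCont(1)[OF G_mono G_cont G_less_1[OF pq(2)]] pq by simp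
  moreover have "0 < \<beta> * (Rfun G q - Rfun G p)"
    using strict_mono_onD[OF H_incr pq] aff[OF pq(1)] aff[OF pq(2)] by (simp add: algebra_simps)
  ultimately show \<beta>: "0 < \<beta>" by (simp add: zero_less_mult_iff)
  have "((\<lambda>y. \<alpha> + \<beta> * Rfun G y) \<longlongrightarrow> \<alpha> + \<beta> * 0) (at_lG G)"
    by (intro tendsto_intros Rfun_at_lG)
  moreover have "eventually (\<lambda>y. \<alpha> + \<beta> * Rfun G y = H y) (at_lG G)"
    using eventually_supp_at_lG by eventually_elim (simp add: aff)
  ultimately have "(H \<longlongrightarrow> \<alpha>) (at_lG G)" by (simp add: tendsto_cong)
  then show "Lim (at_lG G) H = \<alpha>" by (rule tendsto_Lim[OF at_lG_nontrivial])
  fix y assume y: "y \<in> supp"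
  have "exp (- Rfun G y) = 1 - G y" using G_less_1[OF y] by (simp add: Rfun_def)
  moreover have "- (1 / \<beta>) * (H y - \<alpha>) = - Rfun G y" using aff[OF y] \<beta> by (simp add: field_simps)
  ultimately show "G y = 1 - exp (- (1 / \<beta>) * (H y - \<alpha>))" by simp
qed

lemma necessity:
  fixes g :: "real \<Rightarrow> real" and k :: nat
  assumes k: "1 \<le> k" and g_pos: "\<And>y. y \<in> supp \<Longrightarrow> 0 < g y"
    and g_cont: "continuous_on supp g" and g_decr: "strict_antimono_on supp g"
    and ident: "\<And>s t. s \<in> supp \<Longrightarrow> t \<in> supp \<Longrightarrow> s < t \<Longrightarrow>
          cond_exp G k g s t = g t powr (real k / (real k + 1)) * g s powr (1 / (real k + 1))"
  shows "\<exists>c>0. \<forall>y. y \<in> supp \<longrightarrow>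
           G y = 1 - exp (- c * (g y powr (- 1 / (real k + 1))
                  - Lim (at_lG G) (\<lambda>z. g z powr (- 1 / (real k + 1)))))"
proof -
  define H where "H y = g y powr (- 1 / (real k + 1))" for y
  obtain \<alpha> \<beta> where aff: "\<And>y. y \<in> supp \<Longrightarrow> H y = \<alpha> + \<beta> * Rfun G y"
    using reciprocal_root_affine_in_R[OF k g_pos g_cont ident] unfolding H_def by blast
  have "strict_mono_on supp H"
  proof (rule strict_mono_onI)
    fix x y assume "x \<in> supp" "y \<in> supp" "x < y"
    then show "H x < H y"
      unfolding H_def using g_pos monotone_onD[OF g_decr] by (intro powr_less_mono2_neg) auto
  qed
  note form = cdf_form_from_affine[OF aff this]
  show ?thesis
  proof (intro exI[of _ "1 / \<beta>"] conjI allI impI)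
    show "0 < 1 / \<beta>" using form(1) by simp
    fix y assume "y \<in> supp"
    then show "G y = 1 - exp (- (1 / \<beta>) * (g y powr (- 1 / (real k + 1))
                  - Lim (at_lG G) (\<lambda>z. g z powr (- 1 / (real k + 1)))))"
      using form(3) form(2) unfolding H_def[abs_def] by simp
  qed
qed

lemma characterisation:
  fixes g :: "real \<Rightarrow> real" and k :: nat
  assumes k: "1 \<le> k" and g_pos: "\<And>y. y \<in> supp \<Longrightarrow> 0 < g y"
    and g_cont: "continuous_on supp g" and g_decr: "strict_antimono_on supp g"
  shows "(\<forall>s t. s \<in> supp \<and> t \<in> supp \<and> s < t \<longrightarrow>
            cond_exp G k g s t = g t powr (real k / (real k + 1)) * g s powr (1 / (real k + 1)))
         \<longleftrightarrow>
         (\<exists>c>0. \<forall>y. y \<in> supp \<longrightarrow>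
            G y = 1 - exp (- c * (g y powr (- 1 / (real k + 1))
                   - Lim (at_lG G) (\<lambda>z. g z powr (- 1 / (real k + 1))))))"
proof
  assume "\<forall>s t. s \<in> supp \<and> t \<in> supp \<and> s < t \<longrightarrow>
    cond_exp G k g s t = g t powr (real k / (real k + 1)) * g s powr (1 / (real k + 1))"
  then have "\<And>s t. s \<in> supp \<Longrightarrow> t \<in> supp \<Longrightarrow> s < t \<Longrightarrow>
      cond_exp G k g s t = g t powr (real k / (real k + 1)) * g s powr (1 / (real k + 1))"
    by blast
  then show "\<exists>c>0. \<forall>y. y \<in> supp \<longrightarrow> G y = 1 - exp (- c * (g y powr (- 1 / (real k + 1))
      - Lim (at_lG G) (\<lambda>z. g z powr (- 1 / (real k + 1)))))"
    using necessity[OF k g_pos g_cont g_decr] by blast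
next
  assume "\<exists>c>0. \<forall>y. y \<in> supp \<longrightarrow> G y = 1 - exp (- c * (g y powr (- 1 / (real k + 1))
    - Lim (at_lG G) (\<lambda>z. g z powr (- 1 / (real k + 1)))))"
  then obtain c where c: "0 < c" and form: "\<And>y. y \<in> supp \<Longrightarrow> G y = 1 - exp (- c *
      (g y powr (- 1 / (real k + 1)) - Lim (at_lG G) (\<lambda>z. g z powr (- 1 / (real k + 1)))))"
    by blast
  show "\<forall>s t. s \<in> supp \<and> t \<in> supp \<and> s < t \<longrightarrow>
      cond_exp G k g s t = g t powr (real k / (real k + 1)) * g s powr (1 / (real k + 1))"
    using sufficiency[OF k g_pos g_decr c form] by simp
qed

end

text \<open>The main theorem.\<close>

theorem corollary2:
  fixes G g :: "real \<Rightarrow> real" and n k :: nat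
  assumes n2: "n \<ge> 2" and k1: "1 \<le> k" and kn: "k \<le> n - 1"
    and G_mono: "mono G"
    and G_bot: "(G \<longlongrightarrow> 0) at_bot"
    and G_top: "(G \<longlongrightarrow> 1) at_top"
    and G_cont: "continuous_on UNIV G"
    and g_pos: "\<And>y. lG G < ereal y \<Longrightarrow> ereal y < rG G \<Longrightarrow> g y > 0"
    and g_cont: "continuous_on {y. lG G < ereal y \<and> ereal y < rG G} g"
    and g_decr: "strict_antimono_on {y. lG G < ereal y \<and> ereal y < rG G} g"
    and g_lim: "(g \<longlongrightarrow> 0) (at_rG G)"
  shows "(\<forall>s t. lG G < ereal s \<and> s < t \<and> ereal t < rG G \<longrightarrow>
            cond_exp G k g s t = g t powr (real k / (real k + 1)) * g s powr (1 / (real k + 1)))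
         \<longleftrightarrow>
         (\<exists>c>0. \<forall>y. lG G < ereal y \<and> ereal y < rG G \<longrightarrow>
            G y = 1 - exp (- c * (g y powr (- 1 / (real k + 1))
                   - Lim (at_lG G) (\<lambda>z. g z powr (- 1 / (real k + 1))))))"
proof -
  interpret continuous_cdf G
    by (intro continuous_cdf.intro G_mono G_bot G_top G_cont)
  have "\<And>y. y \<in> supp \<Longrightarrow> 0 < g y" using g_pos by simp
  from characterisation[OF k1 this g_cont g_decr] show ?thesis
    unfolding supp_pair_iff by simp
qed

end
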